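(* Let $C$ and $D$ be convex subsets of a real topological vector space $X$. Then $\operatorname{fri} C+\operatorname{fri} D\subseteq\operatorname{fri}(C+D)$, where $+$ denotes Minkowski sum.
   Context: For a convex set $C$, a convex subset $F\subseteq C$ is a face of $C$ if for every $x\in F$ and all $y,z\in C$ with $x\in(y,z)=\{(1-t)y+tz:t\in(0,1)\}$ we have $y,z\in F$; $F_{\min}(x,C)$ is the intersection of all faces of $C$ containing $x\in C$. The face relative interior is $\operatorname{fri} C=\{x\in C: C\subseteq\overline{F_{\min}(x,C)}\}$. *)

theory Defs
  imports "HOL-Analysis.Analysis"
begin

class real_tvs = real_vector + topological_space +
  assumes tvs_continuous_add:
    "\<And>x y :: 'a. filterlim (\<lambda>p. fst p + snd p) (nhds (x + y)) (nhds x \<times>\<^sub>F nhds y)"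
  assumes tvs_continuous_scaleR:
    "\<And>(c::real) (x::'a). filterlim (\<lambda>p. fst p *\<^sub>R snd p) (nhds (c *\<^sub>R x)) (nhds c \<times>\<^sub>F nhds x)"

definition F_min :: "'a::real_vector \<Rightarrow> 'a set \<Rightarrow> 'a set" where
  "F_min x C = \<Inter> {F. F face_of C \<and> x \<in> F}"

definition fri :: "'a::{real_vector,topological_space} set \<Rightarrow> 'a set" where
  "fri C = {x \<in> C. C \<subseteq> closure (F_min x C)}"

definition minkowski_sum :: "'a::real_vector set \<Rightarrow> 'a set \<Rightarrow> 'a set" where
  "minkowski_sum A B = {a + b | a b. a \<in> A \<and> b \<in> B}"

end

theory Submission
  imports Defs
begin

text \<open>If G is a face of C + D containing x + y, then the slice of C sitting in G over y is a
  face of C containing x, so it contains F_min x C; symmetrically, for each c there, the slice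
  of D over c is a face of D containing y. Hence F_min x C + F_min y D \<subseteq> F_min (x + y) (C + D).
  Since addition is continuous, closure S + closure T \<subseteq> closure (S + T), and so C + D lies in
  the closure of the minimal face of x + y whenever C and D lie in the closures of the minimal
  faces of x and y.\<close>

subclass (in real_tvs) topological_comm_monoid_add
  by standard (rule tvs_continuous_add)

lemma minkowski_sum_eq_set_plus: "minkowski_sum A B = A + B"
  by (auto simp: minkowski_sum_def set_plus_def)

lemma closure_set_plus_subset:
  fixes S T :: "'a::topological_monoid_add set"
  shows "closure S + closure T \<subseteq> closure (S + T)"
proof -
  have "continuous_on UNIV (\<lambda>p::'a \<times> 'a. fst p + snd p)"
    by (intro continuous_intros)
  moreover have "(\<lambda>p. fst p + snd p) ` (S \<times> T) \<subseteq> closure (S + T)"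
    using closure_subset by (force simp: set_plus_def)
  ultimately have "(\<lambda>p. fst p + snd p) ` closure (S \<times> T) \<subseteq> closure (S + T)"
    by (intro image_closure_subset) (auto intro: continuous_on_subset)
  then show ?thesis
    by (simp add: closure_Times set_plus_image split_def)
qed

lemma F_min_subset_face: "F face_of C \<Longrightarrow> x \<in> F \<Longrightarrow> F_min x C \<subseteq> F"
  unfolding F_min_def by blast

lemma face_of_translated_slice:
  assumes G: "G face_of C + D" and "convex D" and "c \<in> C"
  shows "{d \<in> D. c + d \<in> G} face_of D"
proof -
  have "(+) c ` D \<subseteq> C + D"
    using \<open>c \<in> C\<close> by (auto simp: set_plus_def)
  then have "(C + D) \<inter> (+) c ` D = (+) c ` D"
    by blast
  then have "G \<inter> (+) c ` D face_of (+) c ` D"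
    using face_of_slice[OF G, of "(+) c ` D"] convex_translation[OF \<open>convex D\<close>, of c] by simp
  moreover have "(+) c ` {d \<in> D. c + d \<in> G} = G \<inter> (+) c ` D"
    by auto
  ultimately have "(+) c ` {d \<in> D. c + d \<in> G} face_of (+) c ` D"
    by simp
  then show ?thesis
    by simp
qed

lemma set_plus_F_min_subset:
  assumes "convex C" "convex D" "x \<in> C" "y \<in> D"
  shows "F_min x C + F_min y D \<subseteq> F_min (x + y) (C + D)"
proof -
  have "c + d \<in> G"
    if G: "G face_of C + D" "x + y \<in> G" and c: "c \<in> F_min x C" and d: "d \<in> F_min y D"
    for G c d
  proof -
    have "G face_of D + C"
      using G(1) by (simp add: add.commute)
    then have "{c \<in> C. y + c \<in> G} face_of C"
      using face_of_translated_slice \<open>convex C\<close> \<open>y \<in> D\<close> by blast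
    moreover have "x \<in> {c \<in> C. y + c \<in> G}"
      using \<open>x \<in> C\<close> G(2) by (simp add: add.commute)
    ultimately have "c \<in> C" "c + y \<in> G"
      using F_min_subset_face c by (fastforce simp: add.commute)+
    then have "{d \<in> D. c + d \<in> G} face_of D" and "y \<in> {d \<in> D. c + d \<in> G}"
      using face_of_translated_slice[OF G(1) \<open>convex D\<close>] \<open>y \<in> D\<close> by auto
    then show ?thesis
      using F_min_subset_face d by blast
  qed
  then show ?thesis
    unfolding F_min_def set_plus_def by blast
qed

theorem proposition4p4:
  fixes C D :: "'a::real_tvs set"
  assumes "convex C" and "convex D"
  shows "minkowski_sum (fri C) (fri D) \<subseteq> fri (minkowski_sum C D)"
proof
  fix z assume "z \<in> minkowski_sum (fri C) (fri D)"
  then obtain x y where z: "z = x + y" and "x \<in> fri C" "y \<in> fri D"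
    by (auto simp: minkowski_sum_eq_set_plus set_plus_def)
  then have "x \<in> C" "y \<in> D" "C \<subseteq> closure (F_min x C)" "D \<subseteq> closure (F_min y D)"
    by (auto simp: fri_def)
  have "C + D \<subseteq> closure (F_min x C) + closure (F_min y D)"
    using \<open>C \<subseteq> _\<close> \<open>D \<subseteq> _\<close> by (rule set_plus_mono2)
  also have "\<dots> \<subseteq> closure (F_min x C + F_min y D)"
    by (rule closure_set_plus_subset)
  also have "\<dots> \<subseteq> closure (F_min z (C + D))"
    unfolding z using set_plus_F_min_subset[OF assms \<open>x \<in> C\<close> \<open>y \<in> D\<close>] by (rule closure_mono)
  finally show "z \<in> fri (minkowski_sum C D)"
    using \<open>x \<in> C\<close> \<open>y \<in> D\<close> z by (auto simp: fri_def minkowski_sum_eq_set_plus)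
qed

end
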